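(* Let $V$ be a nonempty set, $E\subset V\times V$, $W\subset V$, $W^c=V\setminus W$. Then $$\Delta_{W^c}\big(\Delta\cup(B_W\cup K_W^{-1})C_W\big)(E_W^{-1})^*(E_W)^*\,C_W\,(E_W^{-1})^*(E_W)^*\big(\Delta\cup C_W(B_W^-\cup K_W^{-1})\big)\Delta_{W^c} =\Delta_{W^c}(B_W\cup K_W^{-1})\,C_W\,(B_W^-\cup K_W^{-1})\Delta_{W^c}.$$
   Context: Relations on $V$: composition $RR'$: $x(RR')y$ iff there is $z$ with $xRz$ and $zR'y$; $R^{-1}$ is the converse; $R^0=\Delta$, $R^{n+1}=RR^n$, $R^+=\bigcup_{k\ge1}R^k$, $R^*=\bigcup_{k\ge0}R^k$. For $S\subset V$, $\Delta_S=\{(x,x):x\in S\}$, $\Delta=\Delta_V$. Definitions: $E_W=\Delta_{W^c}E$; $B_W=E(E_W)^*$; $B_W^-=(B_W)^{-1}=(E_W^{-1})^*E^{-1}$; $K_W=B_W^-\Delta_{W^c}B_W$; $C_W=(\Delta_WK_W\Delta_W)^+\cup\Delta_W$. *)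

theory Defs
  imports Main
begin

text \<open>Relations on a carrier V are sets of pairs; composition R R' is R O R'.
  R^0 = Delta = Id_on V, so the reflexive-transitive closure is taken relative to V.\<close>

definition rstar :: "'a set \<Rightarrow> ('a \<times> 'a) set \<Rightarrow> ('a \<times> 'a) set" where
  "rstar V R = Id_on V \<union> trancl R"

definition EW :: "'a set \<Rightarrow> ('a \<times> 'a) set \<Rightarrow> 'a set \<Rightarrow> ('a \<times> 'a) set" where
  "EW V E W = Id_on (V - W) O E"

definition BW :: "'a set \<Rightarrow> ('a \<times> 'a) set \<Rightarrow> 'a set \<Rightarrow> ('a \<times> 'a) set" where
  "BW V E W = E O rstar V (EW V E W)"

definition BWm :: "'a set \<Rightarrow> ('a \<times> 'a) set \<Rightarrow> 'a set \<Rightarrow> ('a \<times> 'a) set" where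
  "BWm V E W = converse (BW V E W)"

definition KW :: "'a set \<Rightarrow> ('a \<times> 'a) set \<Rightarrow> 'a set \<Rightarrow> ('a \<times> 'a) set" where
  "KW V E W = BWm V E W O Id_on (V - W) O BW V E W"

definition CW :: "'a set \<Rightarrow> ('a \<times> 'a) set \<Rightarrow> 'a set \<Rightarrow> ('a \<times> 'a) set" where
  "CW V E W = trancl (Id_on W O KW V E W O Id_on W) \<union> Id_on W"

end

theory Submission
  imports Defs
begin

text \<open>Write \<open>S\<close> for \<open>(E\<^sub>W\<inverse>)\<^sup>* (E\<^sub>W)\<^sup>*\<close>, so \<open>x S a\<close> iff \<open>x\<close> and \<open>a\<close> are reached from a
  common vertex \<open>u\<close> by \<open>E\<^sub>W\<close>-paths. If both paths are nontrivial then \<open>u \<notin> W\<close> and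
  \<open>(x, a) \<in> K\<^sub>W\<close>; if only the path to \<open>a\<close> is, then \<open>(x, a) \<in> B\<^sub>W\<close>. Hence \<open>S\<close> restricted
  to \<open>W \<times> W\<close> lies in the transitive relation \<open>C\<^sub>W \<subseteq> W \<times> W\<close>, giving \<open>C\<^sub>W S C\<^sub>W = C\<^sub>W\<close>,
  and \<open>S\<close> from \<open>W\<^sup>c\<close> into \<open>W\<close> lies in \<open>B\<^sub>W \<union> K\<^sub>W\<close>; these absorptions collapse the
  left-hand side onto the right-hand side. Conversely, every pair on the right is realised on
  the left by taking all intermediate vertices equal to one point of \<open>W\<close>.\<close>

lemma converse_rstar: "converse (rstar V R) = rstar V (converse R)"
  by (simp add: rstar_def converse_Un trancl_converse)

lemma converse_KW: "converse (KW V E W) = KW V E W"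
  by (simp add: KW_def BWm_def converse_relcomp O_assoc)

lemma CW_subset_Times: "CW V E W \<subseteq> W \<times> W"
proof -
  have "(Id_on W O KW V E W O Id_on W)\<^sup>+ \<subseteq> W \<times> W"
    by (rule trancl_subset_Sigma) auto
  then show ?thesis
    unfolding CW_def by auto
qed

lemma CW_O_CW: "CW V E W O CW V E W = CW V E W"
  using CW_subset_Times[of V E W] unfolding CW_def by (auto intro: trancl_trans)

lemma CW_absorbs_Id_on: "Id_on W O CW V E W = CW V E W" "CW V E W O Id_on W = CW V E W"
  using CW_subset_Times[of V E W] by auto

lemma converse_CW: "converse (CW V E W) = CW V E W"
  by (simp add: CW_def converse_Un trancl_converse[symmetric] converse_relcomp O_assoc converse_KW)

lemma KW_within_W_subset_CW: "Id_on W O KW V E W O Id_on W \<subseteq> CW V E W"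
  unfolding CW_def by auto

abbreviation SW :: "'a set \<Rightarrow> ('a \<times> 'a) set \<Rightarrow> 'a set \<Rightarrow> ('a \<times> 'a) set" where
  "SW V E W \<equiv> rstar V (converse (EW V E W)) O rstar V (EW V E W)"

context
  fixes V W :: "'a set" and E :: "('a \<times> 'a) set"
  assumes E_subset: "E \<subseteq> V \<times> V"
begin

lemma trancl_EW_subset_BW: "(EW V E W)\<^sup>+ \<subseteq> BW V E W"
proof (rule subrelI)
  fix x y
  assume "(x, y) \<in> (EW V E W)\<^sup>+"
  then obtain z where "(x, z) \<in> EW V E W" "(z, y) \<in> rstar V (EW V E W)"
    using E_subset by (cases rule: converse_tranclE) (auto simp: rstar_def EW_def)
  then show "(x, y) \<in> BW V E W"
    unfolding BW_def EW_def by auto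
qed

lemma trancl_EW_source: "(x, y) \<in> (EW V E W)\<^sup>+ \<Longrightarrow> x \<in> V - W"
  by (erule converse_tranclE) (use E_subset in \<open>auto simp: EW_def\<close>)

lemma common_source_in_KW:
  assumes "(u, x) \<in> (EW V E W)\<^sup>+" and "(u, a) \<in> (EW V E W)\<^sup>+"
  shows "(x, a) \<in> KW V E W"
proof -
  have "(x, u) \<in> BWm V E W" and "(u, u) \<in> Id_on (V - W)" and "(u, a) \<in> BW V E W"
    using assms trancl_EW_subset_BW trancl_EW_source unfolding BWm_def by auto
  then show ?thesis
    unfolding KW_def by blast
qed

lemma SW_into_W_cases:
  assumes "(x, a) \<in> SW V E W" and "a \<in> W"
  shows "x = a \<or> (x \<in> V - W \<and> (x, a) \<in> BW V E W) \<or> (x, a) \<in> KW V E W"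
proof -
  obtain u where ux: "u = x \<or> (u, x) \<in> (EW V E W)\<^sup>+" and ua: "u = a \<or> (u, a) \<in> (EW V E W)\<^sup>+"
    using assms(1) unfolding rstar_def by (auto simp: trancl_converse)
  show ?thesis
  proof (cases "u = x")
    case True
    then show ?thesis
      using ua trancl_EW_subset_BW trancl_EW_source by blast
  next
    case False
    then have "u \<notin> W"
      using ux trancl_EW_source by blast
    then show ?thesis
      using ux ua False assms(2) common_source_in_KW by blast
  qed
qed

lemma SW_within_W_subset_CW: "Id_on W O SW V E W O Id_on W \<subseteq> CW V E W"
  using SW_into_W_cases KW_within_W_subset_CW unfolding CW_def by fastforce

lemma SW_leaving_W_subset: "Id_on (V - W) O SW V E W O Id_on W \<subseteq> BW V E W \<union> KW V E W"
  using SW_into_W_cases by fastforce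

lemma CW_SW_CW_subset: "CW V E W O SW V E W O CW V E W \<subseteq> CW V E W"
proof -
  have "CW V E W O SW V E W O CW V E W = CW V E W O (Id_on W O SW V E W O Id_on W) O CW V E W"
    by (metis CW_absorbs_Id_on O_assoc)
  also have "\<dots> \<subseteq> CW V E W O CW V E W O CW V E W"
    using SW_within_W_subset_CW by (intro relcomp_mono) auto
  finally show ?thesis
    by (simp add: CW_O_CW)
qed

lemma left_factor_subset:
  "Id_on (V - W) O (Id_on V \<union> (BW V E W \<union> converse (KW V E W)) O CW V E W) O SW V E W O CW V E W
     \<subseteq> Id_on (V - W) O (BW V E W \<union> converse (KW V E W)) O CW V E W"
proof (rule subrelI)
  fix x y
  assume "(x, y) \<in> Id_on (V - W) O (Id_on V \<union> (BW V E W \<union> converse (KW V E W)) O CW V E W)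
    O SW V E W O CW V E W"
  then obtain p q where x: "x \<in> V - W"
    and xp: "x = p \<or> (x, p) \<in> (BW V E W \<union> KW V E W) O CW V E W"
    and pq: "(p, q) \<in> SW V E W" and qy: "(q, y) \<in> CW V E W"
    by (auto simp: converse_KW)
  have q: "q \<in> W"
    using qy CW_subset_Times by blast
  have "(x, y) \<in> (BW V E W \<union> KW V E W) O CW V E W"
    using xp
  proof
    assume "x = p"
    then have "(x, q) \<in> BW V E W \<union> KW V E W"
      using SW_leaving_W_subset x q pq by blast
    then show ?thesis
      using qy by blast
  next
    assume "(x, p) \<in> (BW V E W \<union> KW V E W) O CW V E W"
    then obtain m where "(x, m) \<in> BW V E W \<union> KW V E W" and "(m, p) \<in> CW V E W"
      by blast
    moreover have "(m, y) \<in> CW V E W"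
      using CW_SW_CW_subset \<open>(m, p) \<in> CW V E W\<close> pq qy by blast
    ultimately show ?thesis
      by blast
  qed
  then show "(x, y) \<in> Id_on (V - W) O (BW V E W \<union> converse (KW V E W)) O CW V E W"
    using x by (auto simp: converse_KW)
qed

lemma right_factor_subset:
  "CW V E W O SW V E W O (Id_on V \<union> CW V E W O (BWm V E W \<union> converse (KW V E W))) O Id_on (V - W)
     \<subseteq> CW V E W O (BWm V E W \<union> converse (KW V E W)) O Id_on (V - W)"
  using converse_mono[THEN iffD2, OF left_factor_subset]
  by (simp add: converse_relcomp converse_Un converse_rstar converse_CW converse_KW BWm_def O_assoc)

end

theorem lemma4:
  fixes V W :: "'a set" and E :: "('a \<times> 'a) set"
  assumes "V \<noteq> {}" and "E \<subseteq> V \<times> V" and "W \<subseteq> V"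
  shows "Id_on (V - W) O (Id_on V \<union> (BW V E W \<union> converse (KW V E W)) O CW V E W)
           O rstar V (converse (EW V E W)) O rstar V (EW V E W) O CW V E W
           O rstar V (converse (EW V E W)) O rstar V (EW V E W)
           O (Id_on V \<union> CW V E W O (BWm V E W \<union> converse (KW V E W))) O Id_on (V - W)
       = Id_on (V - W) O (BW V E W \<union> converse (KW V E W)) O CW V E W
           O (BWm V E W \<union> converse (KW V E W)) O Id_on (V - W)"
    (is "?lhs = ?rhs")
proof -
  let ?C = "CW V E W" and ?M = "BW V E W \<union> converse (KW V E W)"
    and ?M' = "BWm V E W \<union> converse (KW V E W)" and ?D = "Id_on (V - W)"
  have absorb: "?C O ?C O T = ?C O T" "?C O Id_on W O T = ?C O T" for T
    by (simp_all add: O_assoc[symmetric] CW_O_CW CW_absorbs_Id_on)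
  have "?lhs = (?D O (Id_on V \<union> ?M O ?C) O SW V E W O ?C)
      O (?C O SW V E W O (Id_on V \<union> ?C O ?M') O ?D)"
    by (simp only: O_assoc absorb)
  also have "\<dots> \<subseteq> (?D O ?M O ?C) O (?C O ?M' O ?D)"
    using assms(2) by (intro relcomp_mono left_factor_subset right_factor_subset)
  also have "\<dots> = ?rhs"
    by (simp only: O_assoc absorb)
  finally have lhs_subset: "?lhs \<subseteq> ?rhs" .
  have "?rhs = ?D O (?M O ?C) O Id_on W O Id_on W O ?C O Id_on W O Id_on W O (?C O ?M') O ?D"
    by (simp only: O_assoc absorb)
  also have "\<dots> \<subseteq> ?lhs"
    using assms(3) by (intro relcomp_mono) (auto simp: rstar_def)
  finally have rhs_subset: "?rhs \<subseteq> ?lhs" .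
  show ?thesis
    using lhs_subset rhs_subset by (rule equalityI)
qed

end
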